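(* Let $\Gamma$ be a finite multiset of formulas and $F$ a formula. Then $F\supset\bot,\Gamma\longrightarrow F$ has a $\mathbf{C}$-proof if and only if $\Gamma\longrightarrow F$ has a $\mathbf{C}$-proof.
   Context: Formulas are first-order formulas built from atomic formulas and the logical constants $\top$, $\bot$ (not counted as atomic) using $\land,\lor,\supset,\forall,\exists$; $B[t/x]$ is capture-avoiding substitution of term $t$ for free $x$ in $B$. A sequent $\Gamma\longrightarrow\Delta$ is a pair of finite multisets of formulas; $B,\Gamma$ denotes $\Gamma$ with an extra occurrence of $B$. A sequent is an axiom if $\top\in\Delta$ or some formula that is $\bot$ or atomic occurs in both $\Gamma$ and $\Delta$. Writing premises $\Rightarrow$ conclusion, the rules are all instances of: contr-L: $B,B,\Gamma\longrightarrow\Delta\Rightarrow B,\Gamma\longrightarrow\Delta$; contr-R: $\Gamma\longrightarrow\Delta,B,B\Rightarrow\Gamma\longrightarrow\Delta,B$; $\bot$-R: $\Gamma\longrightarrow\Delta,\bot\Rightarrow\Gamma\longrightarrow\Delta,D$; $\land$-L: $B,\Gamma\longrightarrow\Delta\Rightarrow B\land D,\Gamma\longrightarrow\Delta$ and $D,\Gamma\longrightarrow\Delta\Rightarrow B\land D,\Gamma\longrightarrow\Delta$; $\lor$-L: $B,\Gamma\longrightarrow\Delta$ and $D,\Gamma\longrightarrow\Delta\Rightarrow B\lor D,\Gamma\longrightarrow\Delta$; $\land$-R: $\Gamma\longrightarrow\Delta,B$ and $\Gamma\longrightarrow\Delta,D\Rightarrow\Gamma\longrightarrow\Delta,B\land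 D$; $\lor$-R: $\Gamma\longrightarrow\Delta,B\Rightarrow\Gamma\longrightarrow\Delta,B\lor D$ and $\Gamma\longrightarrow\Delta,D\Rightarrow\Gamma\longrightarrow\Delta,B\lor D$; $\supset$-L: $\Gamma\longrightarrow\Delta,B$ and $D,\Gamma\longrightarrow\Theta\Rightarrow B\supset D,\Gamma\longrightarrow\Delta,\Theta$; $\supset$-R: $B,\Gamma\longrightarrow\Delta,D\Rightarrow\Gamma\longrightarrow\Delta,B\supset D$; $\forall$-L: $B[t/x],\Gamma\longrightarrow\Delta\Rightarrow\forall x B,\Gamma\longrightarrow\Delta$; $\exists$-R: $\Gamma\longrightarrow\Delta,B[t/x]\Rightarrow\Gamma\longrightarrow\Delta,\exists x B$ ($t$ any term); $\exists$-L: $B[c/x],\Gamma\longrightarrow\Delta\Rightarrow\exists x B,\Gamma\longrightarrow\Delta$; $\forall$-R: $\Gamma\longrightarrow\Delta,B[c/x]\Rightarrow\Gamma\longrightarrow\Delta,\forall x B$, where the constant $c$ does not occur in the conclusion. A $\mathbf{C}$-proof (classical) is a finite tree of sequents with axioms at the leaves, each internal node being the conclusion of a rule instance whose premises are its children. *)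

theory Defs
  imports Main "HOL-Library.Multiset"
begin

text \<open>First-order terms and formulas; bound variables are de Bruijn indices
  (loose indices are free variables). Constants are 0-ary function symbols.\<close>

datatype 'f tm = Var nat | Fn 'f "'f tm list"

datatype ('f, 'p) fm =
    Atom 'p "'f tm list"
  | Top
  | Bot
  | Conj "('f, 'p) fm" "('f, 'p) fm"
  | Disj "('f, 'p) fm" "('f, 'p) fm"
  | Imp "('f, 'p) fm" "('f, 'p) fm"
  | Forall "('f, 'p) fm"
  | Exists "('f, 'p) fm"

fun lift_tm :: "nat \<Rightarrow> 'f tm \<Rightarrow> 'f tm" where
  "lift_tm k (Var i) = (if i < k then Var i else Var (Suc i))"
| "lift_tm k (Fn f ts) = Fn f (map (lift_tm k) ts)"

fun subst_tm :: "'f tm \<Rightarrow> nat \<Rightarrow> 'f tm \<Rightarrow> 'f tm" where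
  "subst_tm (Var i) k s = (if i < k then Var i else if i = k then s else Var (i - 1))"
| "subst_tm (Fn f ts) k s = Fn f (map (\<lambda>t. subst_tm t k s) ts)"

fun subst_fm :: "('f, 'p) fm \<Rightarrow> nat \<Rightarrow> 'f tm \<Rightarrow> ('f, 'p) fm" where
  "subst_fm (Atom p ts) k s = Atom p (map (\<lambda>t. subst_tm t k s) ts)"
| "subst_fm Top k s = Top"
| "subst_fm Bot k s = Bot"
| "subst_fm (Conj A B) k s = Conj (subst_fm A k s) (subst_fm B k s)"
| "subst_fm (Disj A B) k s = Disj (subst_fm A k s) (subst_fm B k s)"
| "subst_fm (Imp A B) k s = Imp (subst_fm A k s) (subst_fm B k s)"
| "subst_fm (Forall A) k s = Forall (subst_fm A (Suc k) (lift_tm 0 s))"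
| "subst_fm (Exists A) k s = Exists (subst_fm A (Suc k) (lift_tm 0 s))"

definition inst :: "('f, 'p) fm \<Rightarrow> 'f tm \<Rightarrow> ('f, 'p) fm" where
  "inst B t = subst_fm B 0 t"

fun consts_tm :: "'f tm \<Rightarrow> 'f set" where
  "consts_tm (Var i) = {}"
| "consts_tm (Fn f ts) = (if ts = [] then {f} else \<Union> (set (map consts_tm ts)))"

fun consts_fm :: "('f, 'p) fm \<Rightarrow> 'f set" where
  "consts_fm (Atom p ts) = \<Union> (set (map consts_tm ts))"
| "consts_fm Top = {}"
| "consts_fm Bot = {}"
| "consts_fm (Conj A B) = consts_fm A \<union> consts_fm B"
| "consts_fm (Disj A B) = consts_fm A \<union> consts_fm B"
| "consts_fm (Imp A B) = consts_fm A \<union> consts_fm B"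
| "consts_fm (Forall A) = consts_fm A"
| "consts_fm (Exists A) = consts_fm A"

definition consts_seq :: "('f, 'p) fm multiset \<Rightarrow> ('f, 'p) fm multiset \<Rightarrow> 'f set" where
  "consts_seq \<Gamma> \<Delta> = (\<Union>B \<in> set_mset (\<Gamma> + \<Delta>). consts_fm B)"

fun is_atom :: "('f, 'p) fm \<Rightarrow> bool" where
  "is_atom (Atom p ts) = True"
| "is_atom _ = False"

definition is_axiom :: "('f, 'p) fm multiset \<Rightarrow> ('f, 'p) fm multiset \<Rightarrow> bool" where
  "is_axiom \<Gamma> \<Delta> \<longleftrightarrow> Top \<in># \<Delta> \<or> (\<exists>B. (B = Bot \<or> is_atom B) \<and> B \<in># \<Gamma> \<and> B \<in># \<Delta>)"

text \<open>C-provability: existence of a finite proof tree, as an inductive predicate.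
  add_mset B \<Gamma> is "B, \<Gamma>"; \<Delta> + \<Theta> is "\<Delta>, \<Theta>".\<close>
inductive Cprov :: "('f, 'p) fm multiset \<Rightarrow> ('f, 'p) fm multiset \<Rightarrow> bool" where
  ax: "is_axiom \<Gamma> \<Delta> \<Longrightarrow> Cprov \<Gamma> \<Delta>"
| contrL: "Cprov (add_mset B (add_mset B \<Gamma>)) \<Delta> \<Longrightarrow> Cprov (add_mset B \<Gamma>) \<Delta>"
| contrR: "Cprov \<Gamma> (add_mset B (add_mset B \<Delta>)) \<Longrightarrow> Cprov \<Gamma> (add_mset B \<Delta>)"
| botR: "Cprov \<Gamma> (add_mset Bot \<Delta>) \<Longrightarrow> Cprov \<Gamma> (add_mset D \<Delta>)"
| conjL1: "Cprov (add_mset B \<Gamma>) \<Delta> \<Longrightarrow> Cprov (add_mset (Conj B D) \<Gamma>) \<Delta>"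
| conjL2: "Cprov (add_mset D \<Gamma>) \<Delta> \<Longrightarrow> Cprov (add_mset (Conj B D) \<Gamma>) \<Delta>"
| disjL: "Cprov (add_mset B \<Gamma>) \<Delta> \<Longrightarrow> Cprov (add_mset D \<Gamma>) \<Delta> \<Longrightarrow>
    Cprov (add_mset (Disj B D) \<Gamma>) \<Delta>"
| conjR: "Cprov \<Gamma> (add_mset B \<Delta>) \<Longrightarrow> Cprov \<Gamma> (add_mset D \<Delta>) \<Longrightarrow>
    Cprov \<Gamma> (add_mset (Conj B D) \<Delta>)"
| disjR1: "Cprov \<Gamma> (add_mset B \<Delta>) \<Longrightarrow> Cprov \<Gamma> (add_mset (Disj B D) \<Delta>)"
| disjR2: "Cprov \<Gamma> (add_mset D \<Delta>) \<Longrightarrow> Cprov \<Gamma> (add_mset (Disj B D) \<Delta>)"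
| impL: "Cprov \<Gamma> (add_mset B \<Delta>) \<Longrightarrow> Cprov (add_mset D \<Gamma>) \<Theta> \<Longrightarrow>
    Cprov (add_mset (Imp B D) \<Gamma>) (\<Delta> + \<Theta>)"
| impR: "Cprov (add_mset B \<Gamma>) (add_mset D \<Delta>) \<Longrightarrow> Cprov \<Gamma> (add_mset (Imp B D) \<Delta>)"
| allL: "Cprov (add_mset (inst B t) \<Gamma>) \<Delta> \<Longrightarrow> Cprov (add_mset (Forall B) \<Gamma>) \<Delta>"
| exR: "Cprov \<Gamma> (add_mset (inst B t) \<Delta>) \<Longrightarrow> Cprov \<Gamma> (add_mset (Exists B) \<Delta>)"
| exL: "c \<notin> consts_seq (add_mset (Exists B) \<Gamma>) \<Delta> \<Longrightarrow>
    Cprov (add_mset (inst B (Fn c [])) \<Gamma>) \<Delta> \<Longrightarrow> Cprov (add_mset (Exists B) \<Gamma>) \<Delta>"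
| allR: "c \<notin> consts_seq \<Gamma> (add_mset (Forall B) \<Delta>) \<Longrightarrow>
    Cprov \<Gamma> (add_mset (inst B (Fn c [])) \<Delta>) \<Longrightarrow> Cprov \<Gamma> (add_mset (Forall B) \<Delta>)"

end

(*
  Right to left is one \<supset>-L inference whose right premise \<bottom>, \<Gamma> \<longrightarrow> F comes from the
  axiom \<bottom>, \<Gamma> \<longrightarrow> \<bottom> by \<bottom>-R.  Left to right, F \<supset> \<bottom> on the left is inverted into F on the
  right.  Because of contraction one tracks n copies of F \<supset> \<bottom>: every \<supset>-L inference on
  such a copy is replaced by its left premise, which already has F on the right, weakened
  by the succedent of the discarded right premise; the extra copies of F produced by the
  other \<supset>-L inferences are contracted.  Weakening is admissible only together with a
  renaming of constants, because an eigenconstant may occur in the added formulas and must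
  then be renamed to a fresh one; this is where infinitely many constants are needed.
*)
theory Submission
  imports Defs
begin

fun rename_consts_tm :: "('f \<Rightarrow> 'f) \<Rightarrow> 'f tm \<Rightarrow> 'f tm" where
  "rename_consts_tm \<sigma> (Var i) = Var i"
| "rename_consts_tm \<sigma> (Fn f ts) =
    (if ts = [] then Fn (\<sigma> f) [] else Fn f (map (rename_consts_tm \<sigma>) ts))"

fun rename_consts_fm :: "('f \<Rightarrow> 'f) \<Rightarrow> ('f, 'p) fm \<Rightarrow> ('f, 'p) fm" where
  "rename_consts_fm \<sigma> (Atom p ts) = Atom p (map (rename_consts_tm \<sigma>) ts)"
| "rename_consts_fm \<sigma> Top = Top"
| "rename_consts_fm \<sigma> Bot = Bot"
| "rename_consts_fm \<sigma> (Conj A B) = Conj (rename_consts_fm \<sigma> A) (rename_consts_fm \<sigma> B)"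
| "rename_consts_fm \<sigma> (Disj A B) = Disj (rename_consts_fm \<sigma> A) (rename_consts_fm \<sigma> B)"
| "rename_consts_fm \<sigma> (Imp A B) = Imp (rename_consts_fm \<sigma> A) (rename_consts_fm \<sigma> B)"
| "rename_consts_fm \<sigma> (Forall A) = Forall (rename_consts_fm \<sigma> A)"
| "rename_consts_fm \<sigma> (Exists A) = Exists (rename_consts_fm \<sigma> A)"

lemma rename_consts_lift_tm:
  "rename_consts_tm \<sigma> (lift_tm k t) = lift_tm k (rename_consts_tm \<sigma> t)"
  by (induction t) auto

lemma rename_consts_subst_tm:
  "rename_consts_tm \<sigma> (subst_tm t k s) = subst_tm (rename_consts_tm \<sigma> t) k (rename_consts_tm \<sigma> s)"
  by (induction t) auto

lemma rename_consts_subst_fm: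
  "rename_consts_fm \<sigma> (subst_fm A k s) = subst_fm (rename_consts_fm \<sigma> A) k (rename_consts_tm \<sigma> s)"
  by (induction A arbitrary: k s) (auto simp: rename_consts_subst_tm rename_consts_lift_tm)

lemma rename_consts_inst:
  "rename_consts_fm \<sigma> (inst B t) = inst (rename_consts_fm \<sigma> B) (rename_consts_tm \<sigma> t)"
  by (simp add: inst_def rename_consts_subst_fm)

lemma rename_consts_tm_cong:
  "\<forall>c\<in>consts_tm t. \<sigma> c = \<tau> c \<Longrightarrow> rename_consts_tm \<sigma> t = rename_consts_tm \<tau> t"
  by (induction t) auto

lemma rename_consts_fm_cong:
  "\<forall>c\<in>consts_fm A. \<sigma> c = \<tau> c \<Longrightarrow> rename_consts_fm \<sigma> A = rename_consts_fm \<tau> A"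
  by (induction A) (auto intro: rename_consts_tm_cong)

lemma rename_consts_id_tm [simp]: "rename_consts_tm (\<lambda>c. c) t = t"
  by (induction t) (auto simp: map_idI)

lemma rename_consts_id_fm [simp]: "rename_consts_fm (\<lambda>c. c) A = A"
  by (induction A) (auto simp: map_idI)

lemma is_atom_rename_consts_fm [simp]: "is_atom (rename_consts_fm \<sigma> A) = is_atom A"
  by (cases A) auto

lemma finite_consts_tm: "finite (consts_tm t)"
  by (induction t) auto

lemma finite_consts_fm: "finite (consts_fm A)"
  by (induction A) (auto simp: finite_consts_tm)

lemma ex_fresh_const:
  assumes "infinite (UNIV :: 'f set)"
  shows "\<exists>d::'f. d \<notin> consts_seq \<Gamma> \<Delta>"
proof -
  have "finite (consts_seq \<Gamma> \<Delta>)"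
    by (simp add: consts_seq_def finite_consts_fm)
  then show ?thesis
    using assms ex_new_if_finite by blast
qed

lemma is_axiom_rename_consts_weaken:
  assumes "is_axiom \<Gamma> \<Delta>"
  shows "is_axiom (image_mset (rename_consts_fm \<sigma>) \<Gamma> + X) (image_mset (rename_consts_fm \<sigma>) \<Delta> + Y)"
proof -
  consider "Top \<in># \<Delta>" | B where "B = Bot \<or> is_atom B" "B \<in># \<Gamma>" "B \<in># \<Delta>"
    using assms unfolding is_axiom_def by blast
  then show ?thesis
  proof cases
    case 1
    then show ?thesis
      using imageI[of Top "set_mset \<Delta>" "rename_consts_fm \<sigma>"] by (simp add: is_axiom_def)
  next
    case (2 B)
    let ?B = "rename_consts_fm \<sigma> B"
    have "?B = Bot \<or> is_atom ?B" "?B \<in># image_mset (rename_consts_fm \<sigma>) \<Gamma> + X"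
      "?B \<in># image_mset (rename_consts_fm \<sigma>) \<Delta> + Y"
      using 2 by auto
    then show ?thesis
      unfolding is_axiom_def by blast
  qed
qed

lemma image_mset_rename_consts_update_fresh:
  assumes "\<forall>A\<in>#\<Gamma>. c \<notin> consts_fm A"
  shows "image_mset (rename_consts_fm (\<sigma>(c := d))) \<Gamma> = image_mset (rename_consts_fm \<sigma>) \<Gamma>"
  using assms by (auto intro!: image_mset_cong rename_consts_fm_cong)

lemma rename_consts_update_fresh_inst:
  assumes "c \<notin> consts_fm B"
  shows "rename_consts_fm (\<sigma>(c := d)) (inst B (Fn c [])) = inst (rename_consts_fm \<sigma> B) (Fn d [])"
  using assms by (auto simp: rename_consts_inst intro!: rename_consts_fm_cong arg_cong2[where f = inst])

lemma Cprov_rename_consts_weaken: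
  assumes "infinite (UNIV :: 'f set)" and "Cprov (\<Gamma> :: ('f, 'p) fm multiset) \<Delta>"
  shows "Cprov (image_mset (rename_consts_fm \<sigma>) \<Gamma> + X) (image_mset (rename_consts_fm \<sigma>) \<Delta> + Y)"
  using assms(2)
proof (induction arbitrary: \<sigma> X Y rule: Cprov.induct)
  case (ax \<Gamma> \<Delta>)
  then show ?case by (intro Cprov.ax is_axiom_rename_consts_weaken)
next
  case (contrL B \<Gamma> \<Delta>)
  then show ?case using Cprov.contrL by fastforce
next
  case (contrR \<Gamma> B \<Delta>)
  then show ?case using Cprov.contrR by fastforce
next
  case (botR \<Gamma> \<Delta> D)
  then show ?case using Cprov.botR by fastforce
next
  case (conjL1 B \<Gamma> \<Delta> D)
  then show ?case using Cprov.conjL1 by fastforce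
next
  case (conjL2 D \<Gamma> \<Delta> B)
  then show ?case using Cprov.conjL2 by fastforce
next
  case (disjL B \<Gamma> \<Delta> D)
  then show ?case using Cprov.disjL by fastforce
next
  case (conjR \<Gamma> B \<Delta> D)
  then show ?case using Cprov.conjR by fastforce
next
  case (disjR1 \<Gamma> B \<Delta> D)
  then show ?case using Cprov.disjR1 by fastforce
next
  case (disjR2 \<Gamma> D \<Delta> B)
  then show ?case using Cprov.disjR2 by fastforce
next
  case (impL \<Gamma> B \<Delta> D \<Theta>)
  have "Cprov (image_mset (rename_consts_fm \<sigma>) \<Gamma> + X)
      (add_mset (rename_consts_fm \<sigma> B) (image_mset (rename_consts_fm \<sigma>) \<Delta> + Y))"
    using impL.IH(1)[of \<sigma> X Y] by simp
  moreover have "Cprov (add_mset (rename_consts_fm \<sigma> D) (image_mset (rename_consts_fm \<sigma>) \<Gamma> + X))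
      (image_mset (rename_consts_fm \<sigma>) \<Theta>)"
    using impL.IH(2)[of \<sigma> X "{#}"] by simp
  ultimately show ?case
    using Cprov.impL by (fastforce simp: ac_simps)
next
  case (impR B \<Gamma> D \<Delta>)
  then show ?case using Cprov.impR by fastforce
next
  case (allL B t \<Gamma> \<Delta>)
  then show ?case using Cprov.allL by (fastforce simp: rename_consts_inst)
next
  case (exR \<Gamma> B t \<Delta>)
  then show ?case using Cprov.exR by (fastforce simp: rename_consts_inst)
next
  case (exL c B \<Gamma> \<Delta>)
  obtain d where d: "d \<notin> consts_seq
      (add_mset (Exists (rename_consts_fm \<sigma> B)) (image_mset (rename_consts_fm \<sigma>) \<Gamma> + X))
      (image_mset (rename_consts_fm \<sigma>) \<Delta> + Y)"
    using ex_fresh_const[OF assms(1)] by blast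
  have fresh: "c \<notin> consts_fm B" "\<forall>A\<in>#\<Gamma>. c \<notin> consts_fm A" "\<forall>A\<in>#\<Delta>. c \<notin> consts_fm A"
    using exL.hyps(1) by (auto simp: consts_seq_def)
  have "Cprov (add_mset (inst (rename_consts_fm \<sigma> B) (Fn d [])) (image_mset (rename_consts_fm \<sigma>) \<Gamma> + X))
      (image_mset (rename_consts_fm \<sigma>) \<Delta> + Y)"
    using exL.IH[of "\<sigma>(c := d)" X Y]
    unfolding image_mset_add_mset union_mset_add_mset_left rename_consts_update_fresh_inst[OF fresh(1)]
      image_mset_rename_consts_update_fresh[OF fresh(2)] image_mset_rename_consts_update_fresh[OF fresh(3)] .
  then show ?case
    using Cprov.exL[OF d] by simp
next
  case (allR c \<Gamma> B \<Delta>)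
  obtain d where d: "d \<notin> consts_seq (image_mset (rename_consts_fm \<sigma>) \<Gamma> + X)
      (add_mset (Forall (rename_consts_fm \<sigma> B)) (image_mset (rename_consts_fm \<sigma>) \<Delta> + Y))"
    using ex_fresh_const[OF assms(1)] by blast
  have fresh: "c \<notin> consts_fm B" "\<forall>A\<in>#\<Gamma>. c \<notin> consts_fm A" "\<forall>A\<in>#\<Delta>. c \<notin> consts_fm A"
    using allR.hyps(1) by (auto simp: consts_seq_def)
  have "Cprov (image_mset (rename_consts_fm \<sigma>) \<Gamma> + X)
      (add_mset (inst (rename_consts_fm \<sigma> B) (Fn d [])) (image_mset (rename_consts_fm \<sigma>) \<Delta> + Y))"
    using allR.IH[of "\<sigma>(c := d)" X Y]
    unfolding image_mset_add_mset union_mset_add_mset_left rename_consts_update_fresh_inst[OF fresh(1)]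
      image_mset_rename_consts_update_fresh[OF fresh(2)] image_mset_rename_consts_update_fresh[OF fresh(3)] .
  then show ?case
    using Cprov.allR[OF d] by simp
qed

lemma Cprov_weaken:
  assumes "infinite (UNIV :: 'f set)" and "Cprov (\<Gamma> :: ('f, 'p) fm multiset) \<Delta>"
  shows "Cprov (\<Gamma> + X) (\<Delta> + Y)"
  using Cprov_rename_consts_weaken[OF assms, of "\<lambda>c. c" X Y]
  by (simp add: multiset.map_ident_strong)

lemma Cprov_contr_replicate_right:
  "Cprov \<Gamma> (replicate_mset n A + replicate_mset n A + \<Delta>) \<Longrightarrow> Cprov \<Gamma> (replicate_mset n A + \<Delta>)"
proof (induction n arbitrary: \<Delta>)
  case 0
  then show ?case by simp
next
  case (Suc n)
  then have "Cprov \<Gamma> (add_mset A (add_mset A (replicate_mset n A + replicate_mset n A + \<Delta>)))"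
    by (simp add: ac_simps)
  then have "Cprov \<Gamma> (replicate_mset n A + replicate_mset n A + add_mset A \<Delta>)"
    using Cprov.contrR by fastforce
  then show ?case
    using Suc.IH by fastforce
qed

lemma add_mset_eq_replicate_mset_plus_cases:
  assumes "add_mset A \<Gamma>' = replicate_mset n B + \<Gamma>"
  obtains (principal) m where "A = B" "n = Suc m" "\<Gamma>' = replicate_mset m B + \<Gamma>"
  | (side) \<Gamma>0 where "\<Gamma> = add_mset A \<Gamma>0" "\<Gamma>' = replicate_mset n B + \<Gamma>0"
proof (cases "A \<in># \<Gamma>")
  case True
  then obtain \<Gamma>0 where "\<Gamma> = add_mset A \<Gamma>0"
    by (meson mset_add)
  with assms that(2) show ?thesis
    by simp
next
  case False
  have "A \<in># replicate_mset n B + \<Gamma>"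
    using assms[symmetric] by simp
  with False obtain m where "A = B" "n = Suc m"
    by (cases n) (auto split: if_splits)
  with assms that(1) show ?thesis
    by simp
qed

lemma consts_seq_replicate_imp_bot:
  "consts_seq (replicate_mset n (Imp F Bot) + \<Gamma>) \<Delta> = consts_seq \<Gamma> (replicate_mset n F + \<Delta>)"
  by (auto simp: consts_seq_def split: if_splits)

lemma Cprov_imp_bot_inversion:
  assumes "infinite (UNIV :: 'f set)"
  shows "Cprov \<Gamma>' (\<Delta> :: ('f, 'p) fm multiset) \<Longrightarrow> \<Gamma>' = replicate_mset n (Imp F Bot) + \<Gamma> \<Longrightarrow>
    Cprov \<Gamma> (replicate_mset n F + \<Delta>)"
proof (induction arbitrary: n \<Gamma> rule: Cprov.induct)
  case (ax \<Gamma>' \<Delta>)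
  then show ?case
    by (auto simp: is_axiom_def split: if_splits intro!: Cprov.ax)
next
  case (contrL B \<Gamma>' \<Delta> n \<Gamma>)
  from contrL.prems show ?case
  proof (cases rule: add_mset_eq_replicate_mset_plus_cases)
    case (principal m)
    then have "Cprov \<Gamma> (add_mset F (add_mset F (replicate_mset m F + \<Delta>)))"
      using contrL.IH[of "Suc (Suc m)" \<Gamma>] by simp
    then show ?thesis
      using principal Cprov.contrR by fastforce
  next
    case (side \<Gamma>0)
    then have "Cprov (add_mset B (add_mset B \<Gamma>0)) (replicate_mset n F + \<Delta>)"
      using contrL.IH[of n "add_mset B (add_mset B \<Gamma>0)"] by simp
    then show ?thesis
      using side Cprov.contrL by fastforce
  qed
next
  case (contrR \<Gamma>' B \<Delta> n \<Gamma>)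
  show ?case
    using contrR.IH[OF contrR.prems] Cprov.contrR[of \<Gamma> B "replicate_mset n F + \<Delta>"] by simp
next
  case (botR \<Gamma>' \<Delta> D n \<Gamma>)
  show ?case
    using botR.IH[OF botR.prems] Cprov.botR[of \<Gamma> "replicate_mset n F + \<Delta>"] by simp
next
  case (conjL1 B \<Gamma>' \<Delta> D n \<Gamma>)
  from conjL1.prems obtain \<Gamma>0
    where "\<Gamma> = add_mset (Conj B D) \<Gamma>0" "\<Gamma>' = replicate_mset n (Imp F Bot) + \<Gamma>0"
    by (auto elim: add_mset_eq_replicate_mset_plus_cases)
  then show ?case
    using conjL1.IH[of n "add_mset B \<Gamma>0"] Cprov.conjL1 by simp
next
  case (conjL2 D \<Gamma>' \<Delta> B n \<Gamma>)
  from conjL2.prems obtain \<Gamma>0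
    where "\<Gamma> = add_mset (Conj B D) \<Gamma>0" "\<Gamma>' = replicate_mset n (Imp F Bot) + \<Gamma>0"
    by (auto elim: add_mset_eq_replicate_mset_plus_cases)
  then show ?case
    using conjL2.IH[of n "add_mset D \<Gamma>0"] Cprov.conjL2 by simp
next
  case (disjL B \<Gamma>' \<Delta> D n \<Gamma>)
  from disjL.prems obtain \<Gamma>0
    where "\<Gamma> = add_mset (Disj B D) \<Gamma>0" "\<Gamma>' = replicate_mset n (Imp F Bot) + \<Gamma>0"
    by (auto elim: add_mset_eq_replicate_mset_plus_cases)
  then show ?case
    using disjL.IH[of n "add_mset B \<Gamma>0"] disjL.IH[of n "add_mset D \<Gamma>0"] Cprov.disjL by simp
next
  case (conjR \<Gamma>' B \<Delta> D n \<Gamma>)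
  show ?case
    using conjR.IH[OF conjR.prems] Cprov.conjR[of \<Gamma> B "replicate_mset n F + \<Delta>"] by simp
next
  case (disjR1 \<Gamma>' B \<Delta> D n \<Gamma>)
  show ?case
    using disjR1.IH[OF disjR1.prems] Cprov.disjR1[of \<Gamma> B "replicate_mset n F + \<Delta>"] by simp
next
  case (disjR2 \<Gamma>' D \<Delta> B n \<Gamma>)
  show ?case
    using disjR2.IH[OF disjR2.prems] Cprov.disjR2[of \<Gamma> D "replicate_mset n F + \<Delta>"] by simp
next
  case (impL \<Gamma>' B \<Delta> D \<Theta> n \<Gamma>)
  from impL.prems show ?case
  proof (cases rule: add_mset_eq_replicate_mset_plus_cases)
    case (principal m)
    then have "Cprov \<Gamma> (replicate_mset n F + \<Delta>)"
      using impL.IH(1)[of m \<Gamma>] by simp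
    then show ?thesis
      using Cprov_weaken[OF assms, of \<Gamma> "replicate_mset n F + \<Delta>" "{#}" \<Theta>] by (simp add: add.assoc)
  next
    case (side \<Gamma>0)
    have "Cprov \<Gamma>0 (add_mset B (replicate_mset n F + \<Delta>))"
      using impL.IH(1)[of n \<Gamma>0] side by simp
    moreover have "Cprov (add_mset D \<Gamma>0) (replicate_mset n F + \<Theta>)"
      using impL.IH(2)[of n "add_mset D \<Gamma>0"] side by simp
    ultimately have "Cprov \<Gamma> (replicate_mset n F + replicate_mset n F + (\<Delta> + \<Theta>))"
      using side Cprov.impL by (fastforce simp: ac_simps)
    then show ?thesis
      by (rule Cprov_contr_replicate_right)
  qed
next
  case (impR B \<Gamma>' D \<Delta> n \<Gamma>)
  show ?case
    using impR.IH[of n "add_mset B \<Gamma>"] impR.prems Cprov.impR[of B \<Gamma> D "replicate_mset n F + \<Delta>"]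
    by simp
next
  case (allL B t \<Gamma>' \<Delta> n \<Gamma>)
  from allL.prems obtain \<Gamma>0
    where "\<Gamma> = add_mset (Forall B) \<Gamma>0" "\<Gamma>' = replicate_mset n (Imp F Bot) + \<Gamma>0"
    by (auto elim: add_mset_eq_replicate_mset_plus_cases)
  then show ?case
    using allL.IH[of n "add_mset (inst B t) \<Gamma>0"] Cprov.allL by simp
next
  case (exR \<Gamma>' B t \<Delta> n \<Gamma>)
  show ?case
    using exR.IH[OF exR.prems] Cprov.exR[of \<Gamma> B t "replicate_mset n F + \<Delta>"] by simp
next
  case (exL c B \<Gamma>' \<Delta> n \<Gamma>)
  from exL.prems obtain \<Gamma>0
    where \<Gamma>0: "\<Gamma> = add_mset (Exists B) \<Gamma>0" "\<Gamma>' = replicate_mset n (Imp F Bot) + \<Gamma>0"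
    by (auto elim: add_mset_eq_replicate_mset_plus_cases)
  have "c \<notin> consts_seq (add_mset (Exists B) \<Gamma>0) (replicate_mset n F + \<Delta>)"
    using exL.hyps(1) \<Gamma>0 consts_seq_replicate_imp_bot[of n F "add_mset (Exists B) \<Gamma>0" \<Delta>] by simp
  then show ?case
    using exL.IH[of n "add_mset (inst B (Fn c [])) \<Gamma>0"] \<Gamma>0 Cprov.exL by simp
next
  case (allR c \<Gamma>' B \<Delta> n \<Gamma>)
  have "c \<notin> consts_seq \<Gamma> (add_mset (Forall B) (replicate_mset n F + \<Delta>))"
    using allR.hyps(1) allR.prems consts_seq_replicate_imp_bot[of n F \<Gamma> "add_mset (Forall B) \<Delta>"] by simp
  then show ?case
    using allR.IH[OF allR.prems] Cprov.allR by simp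
qed

theorem lemma3:
  fixes \<Gamma> :: "('f, 'p) fm multiset" and F :: "('f, 'p) fm"
  assumes "infinite (UNIV :: 'f set)"
  shows "Cprov (add_mset (Imp F Bot) \<Gamma>) {#F#} \<longleftrightarrow> Cprov \<Gamma> {#F#}"
proof
  assume "Cprov (add_mset (Imp F Bot) \<Gamma>) {#F#}"
  then have "Cprov \<Gamma> (add_mset F {#F#})"
    using Cprov_imp_bot_inversion[OF assms, of _ _ 1 F \<Gamma>] by simp
  then show "Cprov \<Gamma> {#F#}"
    by (rule Cprov.contrR)
next
  assume F: "Cprov \<Gamma> {#F#}"
  have "Cprov (add_mset Bot \<Gamma>) {#Bot#}"
    by (rule Cprov.ax) (simp add: is_axiom_def)
  then have "Cprov (add_mset Bot \<Gamma>) {#F#}"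
    using Cprov.botR[of "add_mset Bot \<Gamma>" "{#}" F] by simp
  then show "Cprov (add_mset (Imp F Bot) \<Gamma>) {#F#}"
    using Cprov.impL[of \<Gamma> F "{#}" Bot "{#F#}"] F by simp
qed

end
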